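(* Let $p>3$ be a prime and $f:V_n^{(p)}\to\mathbb{F}_p$ a function with $f(0)=0$. Suppose that for every $a\in\mathbb{F}_p^*$ there is an even integer $l_a$ with $2\le l_a\le p-1$ such that $f(ax)=a^{l_a}f(x)$ for all $x\in V_n^{(p)}$. Then the defining-set codes $\mathcal{C}_{D_{f,0}\setminus\{0\}}$, $\mathcal{C}_{D_{f,sq}}$ and $\mathcal{C}_{D_{f,nsq}}$ are self-orthogonal.
   Context: $V_n^{(p)}$ is an $n$-dimensional $\mathbb{F}_p$-vector space with a non-degenerate symmetric bilinear form $\langle\cdot,\cdot\rangle_n$; $\mathbb{F}_p^*=\mathbb{F}_p\setminus\{0\}$; $SQ$ and $NSQ$ are the nonzero squares and nonsquares of $\mathbb{F}_p$. $D_{f,0}=\{x:f(x)=0\}$, $D_{f,sq}=\{x:f(x)\in SQ\}$, $D_{f,nsq}=\{x:f(x)\in NSQ\}$. For $D=\{x_1,\dots,x_m\}\subseteq V_n^{(p)}$, $\mathcal{C}_D=\{(\langle a,x_1\rangle_n,\dots,\langle a,x_m\rangle_n):a\in V_n^{(p)}\}$. A linear code is self-orthogonal if $\mathcal{C}\subseteq\mathcal{C}^\perp$ with respect to the standard dot product. *)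

theory Defs
  imports "Berlekamp_Zassenhaus.Finite_Field"
begin

text \<open>F_p is the type 'p mod_ring with CARD('p) = p prime; V_n^{(p)} is the
  space of functions 'n \<Rightarrow> 'p mod_ring over a finite index type 'n of size n,
  with pointwise addition and scalar multiplication.\<close>

type_synonym ('p, 'n) vecsp = "'n \<Rightarrow> 'p mod_ring"

definition vzero :: "('p::prime_card, 'n::finite) vecsp" where
  "vzero = (\<lambda>i. 0)"

definition vadd :: "('p::prime_card, 'n::finite) vecsp \<Rightarrow> ('p, 'n) vecsp \<Rightarrow> ('p, 'n) vecsp" where
  "vadd x y = (\<lambda>i. x i + y i)"

definition vscale :: "'p::prime_card mod_ring \<Rightarrow> ('p, 'n::finite) vecsp \<Rightarrow> ('p, 'n) vecsp" where
  "vscale c x = (\<lambda>i. c * x i)"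

definition nondeg_sym_bilinear :: "(('p::prime_card, 'n::finite) vecsp \<Rightarrow> ('p, 'n) vecsp \<Rightarrow> 'p mod_ring) \<Rightarrow> bool" where
  "nondeg_sym_bilinear B \<longleftrightarrow>
     (\<forall>x y. B x y = B y x) \<and>
     (\<forall>x y z. B (vadd x y) z = B x z + B y z) \<and>
     (\<forall>c x z. B (vscale c x) z = c * B x z) \<and>
     (\<forall>x. (\<forall>y. B x y = 0) \<longrightarrow> x = vzero)"

definition SQ :: "'p::prime_card mod_ring set" where
  "SQ = {y. y \<noteq> 0 \<and> (\<exists>z. y = z ^ 2)}"

definition NSQ :: "'p::prime_card mod_ring set" where
  "NSQ = {y. y \<noteq> 0 \<and> y \<notin> SQ}"

definition D_zero :: "(('p::prime_card, 'n::finite) vecsp \<Rightarrow> 'p mod_ring) \<Rightarrow> ('p, 'n) vecsp set" where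
  "D_zero f = {x. f x = 0}"

definition D_sq :: "(('p::prime_card, 'n::finite) vecsp \<Rightarrow> 'p mod_ring) \<Rightarrow> ('p, 'n) vecsp set" where
  "D_sq f = {x. f x \<in> SQ}"

definition D_nsq :: "(('p::prime_card, 'n::finite) vecsp \<Rightarrow> 'p mod_ring) \<Rightarrow> ('p, 'n) vecsp set" where
  "D_nsq f = {x. f x \<in> NSQ}"

text \<open>The code C_D: codewords are indexed by the elements of D (coordinates
  outside D are fixed to 0; the ordering of D is irrelevant for orthogonality).\<close>
definition code_of :: "(('p::prime_card, 'n::finite) vecsp \<Rightarrow> ('p, 'n) vecsp \<Rightarrow> 'p mod_ring)
    \<Rightarrow> ('p, 'n) vecsp set \<Rightarrow> (('p, 'n) vecsp \<Rightarrow> 'p mod_ring) set" where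
  "code_of B D = {(\<lambda>x. if x \<in> D then B a x else 0) | a. True}"

definition self_orthogonal :: "'x set \<Rightarrow> ('x \<Rightarrow> 'a::comm_ring_1) set \<Rightarrow> bool" where
  "self_orthogonal D C \<longleftrightarrow> (\<forall>c\<in>C. \<forall>c'\<in>C. (\<Sum>x\<in>D. c x * c' x) = 0)"

end

theory Submission
  imports Defs
begin

text \<open>Every defining set D in question is a cone: it is mapped onto itself by each
  non-zero scaling x \<mapsto> c x, because f (c x) = c^l f x with l even changes f x only
  by a non-zero square factor. Reindexing the sum \<Sum>x\<in>D. B a x * B b x along
  x \<mapsto> 2 x therefore multiplies it by 4, and 4 \<noteq> 1 in F_p for p > 3, so the sum
  vanishes.\<close>

definition scale_invariant :: "('p::prime_card, 'n::finite) vecsp set \<Rightarrow> bool" where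
  "scale_invariant D \<longleftrightarrow> (\<forall>c x. c \<noteq> 0 \<longrightarrow> x \<in> D \<longrightarrow> vscale c x \<in> D)"

lemma vscale_vscale: "vscale c (vscale d x) = vscale (c * d) x"
  by (simp add: vscale_def mult.assoc)

lemma vscale_one: "vscale 1 x = x"
  by (simp add: vscale_def)

lemma vscale_eq_vzero_iff: "vscale c x = vzero \<longleftrightarrow> c = 0 \<or> x = vzero"
  by (auto simp: vscale_def vzero_def fun_eq_iff)

lemma nondeg_sym_bilinear_vscale_right:
  assumes "nondeg_sym_bilinear B"
  shows "B y (vscale c x) = c * B y x"
  using assms unfolding nondeg_sym_bilinear_def by metis

lemma scale_invariant_Diff_vzero:
  assumes "scale_invariant D"
  shows "scale_invariant (D - {vzero})"
  using assms unfolding scale_invariant_def by (auto simp: vscale_eq_vzero_iff)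

lemma bij_betw_vscale:
  assumes "scale_invariant D" and "c \<noteq> 0"
  shows "bij_betw (vscale c) D D"
proof (rule bij_betwI[where g = "vscale (inverse c)"])
  show "vscale c \<in> D \<rightarrow> D" "vscale (inverse c) \<in> D \<rightarrow> D"
    using assms unfolding scale_invariant_def by auto
qed (use assms(2) in \<open>simp_all add: vscale_vscale vscale_one\<close>)

lemma self_orthogonal_code_of_scale_invariant:
  fixes B :: "('p::prime_card, 'n::finite) vecsp \<Rightarrow> ('p, 'n) vecsp \<Rightarrow> 'p mod_ring"
    and c :: "'p mod_ring"
  assumes B: "\<And>y c x. B y (vscale c x) = c * B y x" and D: "scale_invariant D"
    and c: "c \<noteq> 0" "c ^ 2 \<noteq> 1"
  shows "self_orthogonal D (code_of B D)"
  unfolding self_orthogonal_def code_of_def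
proof clarify
  fix a b
  let ?S = "\<Sum>x\<in>D. B a x * B b x"
  have "?S = (\<Sum>x\<in>D. B a (vscale c x) * B b (vscale c x))"
    using sum.reindex_bij_betw[OF bij_betw_vscale[OF D c(1)], of "\<lambda>x. B a x * B b x"] by simp
  also have "\<dots> = c ^ 2 * ?S"
    by (simp add: B sum_distrib_left power2_eq_square
        mult_ac)
  finally have "(c ^ 2 - 1) * ?S = 0"
    by (simp add: left_diff_distrib)
  with c(2) have "?S = 0"
    by simp
  then show "(\<Sum>x\<in>D. (if x \<in> D then B a x else 0) * (if x \<in> D then B b x else 0)) = 0"
    by (simp cong: sum.cong)
qed

lemma square_mult_mem_SQ_iff:
  assumes "w \<noteq> 0"
  shows "w ^ 2 * y \<in> SQ \<longleftrightarrow> y \<in> SQ"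
proof
  assume "w ^ 2 * y \<in> SQ"
  then obtain z where "w ^ 2 * y = z ^ 2" "y \<noteq> 0"
    unfolding SQ_def by auto
  with assms have "y = (z / w) ^ 2"
    by (simp add: field_simps)
  with \<open>y \<noteq> 0\<close> show "y \<in> SQ"
    unfolding SQ_def by blast
next
  assume "y \<in> SQ"
  then obtain z where "y = z ^ 2" "y \<noteq> 0"
    unfolding SQ_def by auto
  with assms have "w ^ 2 * y = (w * z) ^ 2" "w ^ 2 * y \<noteq> 0"
    by (simp_all add: power_mult_distrib)
  then show "w ^ 2 * y \<in> SQ"
    unfolding SQ_def by blast
qed

lemma square_mult_mem_NSQ_iff:
  assumes "w \<noteq> 0"
  shows "w ^ 2 * y \<in> NSQ \<longleftrightarrow> y \<in> NSQ"
  using assms square_mult_mem_SQ_iff[OF assms] unfolding NSQ_def by simp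

lemma scale_invariant_vimage:
  fixes f :: "('p::prime_card, 'n::finite) vecsp \<Rightarrow> 'p mod_ring"
  assumes f: "\<And>c x. c \<noteq> 0 \<Longrightarrow> \<exists>w. w \<noteq> 0 \<and> f (vscale c x) = w ^ 2 * f x"
    and S: "\<And>w y. w \<noteq> 0 \<Longrightarrow> y \<in> S \<Longrightarrow> w ^ 2 * y \<in> S"
  shows "scale_invariant (f -` S)"
  unfolding scale_invariant_def
proof (intro allI impI)
  fix c :: "'p mod_ring" and x
  assume "c \<noteq> 0" "x \<in> f -` S"
  moreover obtain w where "w \<noteq> 0" "f (vscale c x) = w ^ 2 * f x"
    using f[OF \<open>c \<noteq> 0\<close>] by blast
  ultimately show "vscale c x \<in> f -` S"
    using S by simp
qed

lemma even_homogeneous_square_factor: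
  assumes "f (vscale c x) = c ^ l * f x" and "even l" and "c \<noteq> 0"
  shows "\<exists>w. w \<noteq> 0 \<and> f (vscale c x) = w ^ 2 * f x"
proof -
  from \<open>even l\<close> obtain k where "l = 2 * k"
    by (rule evenE)
  with assms show ?thesis
    by (intro exI[of _ "c ^ k"]) (simp add: power_mult mult.commute[of 2 k])
qed

lemma of_nat_mod_ring_neq_zero:
  assumes "0 < k" and "k < CARD('p::prime_card)"
  shows "(of_nat k :: 'p mod_ring) \<noteq> 0"
proof
  assume "(of_nat k :: 'p mod_ring) = 0"
  then have "CARD('p) dvd k"
    by (rule of_nat_0_mod_ring_dvd)
  with assms show False
    by (auto dest: dvd_imp_le)
qed

lemma mod_ring_two_square_neq_one:
  assumes "CARD('p::prime_card) > 3"
  shows "(2 :: 'p mod_ring) \<noteq> 0" "(2 :: 'p mod_ring) ^ 2 \<noteq> 1"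
proof -
  have "(of_nat 2 :: 'p mod_ring) \<noteq> 0" "(of_nat 3 :: 'p mod_ring) \<noteq> 0"
    using assms by (intro of_nat_mod_ring_neq_zero; simp)+
  then have "(2 :: 'p mod_ring) \<noteq> 0" "(2 :: 'p mod_ring) ^ 2 - 1 \<noteq> 0"
    by simp_all
  then show "(2 :: 'p mod_ring) \<noteq> 0" "(2 :: 'p mod_ring) ^ 2 \<noteq> 1"
    by (simp_all only: right_minus_eq not_False_eq_True)
qed

theorem lemma14:
  fixes B :: "('p::prime_card, 'n::finite) vecsp \<Rightarrow> ('p, 'n) vecsp \<Rightarrow> 'p mod_ring"
    and f :: "('p, 'n) vecsp \<Rightarrow> 'p mod_ring"
  assumes "CARD('p) > 3"
    and "nondeg_sym_bilinear B"
    and "f vzero = 0"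
    and "\<forall>a::'p mod_ring. a \<noteq> 0 \<longrightarrow>
           (\<exists>l::nat. even l \<and> 2 \<le> l \<and> l \<le> CARD('p) - 1 \<and>
              (\<forall>x. f (vscale a x) = a ^ l * f x))"
  shows "self_orthogonal (D_zero f - {vzero}) (code_of B (D_zero f - {vzero}))
       \<and> self_orthogonal (D_sq f) (code_of B (D_sq f))
       \<and> self_orthogonal (D_nsq f) (code_of B (D_nsq f))"
proof -
  have square_factor: "\<exists>w. w \<noteq> 0 \<and> f (vscale c x) = w ^ 2 * f x" if "c \<noteq> 0" for c x
  proof -
    obtain l where "even l" "f (vscale c x) = c ^ l * f x"
      using assms(4) \<open>c \<noteq> 0\<close> by blast
    then show ?thesis
      using even_homogeneous_square_factor \<open>c \<noteq> 0\<close> by blast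
  qed
  have invariant: "scale_invariant (f -` S)"
    if "\<And>w y. w \<noteq> 0 \<Longrightarrow> y \<in> S \<Longrightarrow> w ^ 2 * y \<in> S" for S
    by (rule scale_invariant_vimage[of f, OF square_factor that])
  have "scale_invariant (f -` {0})" "scale_invariant (f -` SQ)" "scale_invariant (f -` NSQ)"
    by (auto intro!: invariant simp: square_mult_mem_SQ_iff square_mult_mem_NSQ_iff)
  moreover have "D_zero f = f -` {0}" "D_sq f = f -` SQ" "D_nsq f = f -` NSQ"
    unfolding D_zero_def D_sq_def D_nsq_def by auto
  ultimately have "scale_invariant (D_zero f - {vzero})" "scale_invariant (D_sq f)"
    "scale_invariant (D_nsq f)"
    by (simp_all add: scale_invariant_Diff_vzero)
  moreover have scale_right: "B y (vscale c x) = c * B y x" for y c x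
    using assms(2) by (rule nondeg_sym_bilinear_vscale_right)
  ultimately show ?thesis
    using self_orthogonal_code_of_scale_invariant[where B = B, OF scale_right _
        mod_ring_two_square_neq_one[OF assms(1)]]
    by blast
qed

end
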